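(* Let $G$ be a finite group acting linearly on a finite-dimensional complex vector space $V$ with $V^G=\{0\}$. Let $I\subseteq\mathbb{R}$ be an open interval containing $0$ and $c=(c_1,\dots,c_n):I\to V/\!\!/G=\sigma(V)\subseteq\mathbb{C}^n$ a curve of class $C^d$. Then the following are equivalent: (1) $m(c_k)\ge d_k$ for all $1\le k\le n$; (2) $m(f\circ c)\ge\deg f$ for all homogeneous $f\in\mathcal{J}_1$.
   Context: $V^G$ is the subspace of $G$-fixed vectors. $\sigma=(\sigma_1,\dots,\sigma_n)$, where $\sigma_1,\dots,\sigma_n$ is a minimal system of homogeneous generators of $\mathbb{C}[V]^G$ with degrees $d_1,\dots,d_n$, and $d=\max_k d_k$; $V/\!\!/G$ is identified with $\sigma(V)$. For $f\in\mathbb{C}[V]^G$ write $f=p\circ\sigma$ with a polynomial $p$ on $\mathbb{C}^n$ and set $f\circ c:=p\circ c$ (well-defined since $c$ takes values in $\sigma(V)$); $\deg f$ is its degree as a polynomial on $V$. The stratification: for a conjugacy class $(L)$ of subgroups, $(V/\!\!/G)_{(L)}$ is the set of $\sigma(v)$ with $G_v\in(L)$; $A_s$ is the union of those strata of dimension $\le s$. $\mathcal{J}_{s+1}$ denotes an ideal of $\mathbb{C}[V]^G$ generated by homogeneous elements whose zero set in $V/\!\!/G$ is $A_s$ (here $A_0=\{0\}$). The multiplicity $m(g)$ at $0$ of a continuous function $g$ defined near $0\in\mathbb{R}$ is the supremum of all integers $p$ such that $g(t)=t^p h(t)$ near $0$ with $h$ continuous. *)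

theory Defs
  imports "HOL-Analysis.Analysis" "HOL-Library.Extended_Nat"
begin

inductive polyfun_on :: "'i set \<Rightarrow> (('i \<Rightarrow> complex) \<Rightarrow> complex) \<Rightarrow> bool"
  for I :: "'i set" where
  pf_const: "polyfun_on I (\<lambda>x. c)"
| pf_coord: "i \<in> I \<Longrightarrow> polyfun_on I (\<lambda>x. x i)"
| pf_add: "polyfun_on I p \<Longrightarrow> polyfun_on I q \<Longrightarrow> polyfun_on I (\<lambda>x. p x + q x)"
| pf_mult: "polyfun_on I p \<Longrightarrow> polyfun_on I q \<Longrightarrow> polyfun_on I (\<lambda>x. p x * q x)"

definition poly_V :: "(complex ^ 'v \<Rightarrow> complex) \<Rightarrow> bool" where
  "poly_V f \<longleftrightarrow> (\<exists>p. polyfun_on (UNIV :: 'v set) p \<and> (\<forall>v. f v = p (\<lambda>i. v $ i)))"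

definition homog_V :: "nat \<Rightarrow> (complex ^ 'v \<Rightarrow> complex) \<Rightarrow> bool" where
  "homog_V k f \<longleftrightarrow> poly_V f \<and> (\<forall>t v. f (t *s v) = t ^ k * f v)"

definition inv_ring :: "(complex ^ 'v ^ 'v) set \<Rightarrow> (complex ^ 'v \<Rightarrow> complex) set" where
  "inv_ring G = {f. poly_V f \<and> (\<forall>A\<in>G. \<forall>v. f (A *v v) = f v)}"

inductive_set ideal_gen :: "('a \<Rightarrow> complex) set \<Rightarrow> ('a \<Rightarrow> complex) set \<Rightarrow> ('a \<Rightarrow> complex) set"
  for R S where
  ig_zero: "(\<lambda>x. 0) \<in> ideal_gen R S"
| ig_gen: "s \<in> S \<Longrightarrow> s \<in> ideal_gen R S"
| ig_add: "a \<in> ideal_gen R S \<Longrightarrow> b \<in> ideal_gen R S \<Longrightarrow> (\<lambda>x. a x + b x) \<in> ideal_gen R S"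
| ig_mult: "r \<in> R \<Longrightarrow> a \<in> ideal_gen R S \<Longrightarrow> (\<lambda>x. r x * a x) \<in> ideal_gen R S"

definition Ck_on :: "nat \<Rightarrow> real set \<Rightarrow> (real \<Rightarrow> complex) \<Rightarrow> bool" where
  "Ck_on k I f \<longleftrightarrow> (\<exists>D :: nat \<Rightarrow> real \<Rightarrow> complex.
      (\<forall>t\<in>I. D 0 t = f t) \<and>
      (\<forall>j<k. \<forall>t\<in>I. (D j has_vector_derivative D (Suc j) t) (at t)) \<and>
      continuous_on I (D k))"

definition mult0 :: "(real \<Rightarrow> complex) \<Rightarrow> enat" where
  "mult0 g = Sup {enat p | p. \<exists>h \<epsilon>. \<epsilon> > 0 \<and> continuous_on (ball 0 \<epsilon>) h \<and>
                      (\<forall>t \<in> ball 0 \<epsilon>. g t = (complex_of_real t) ^ p * h t)}"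

end

theory Submission
  imports Defs "HOL-Computational_Algebra.Polynomial"
begin

(* Direction (1) => (2): if every coordinate c_j of the curve factors as t^(d_j) h_j(t) with h_j
   continuous, then for a homogeneous invariant f = p o sigma of degree k, homogeneity of f and of
   the sigma_j gives p(c(t)) = t^k p(h(t)) (lift c(t) = sigma(v) and rescale v by 1/t).
   Direction (2) => (1): the homogeneous generators S of J have no common zero on the unit sphere
   (a nonzero vector is separated from 0 by an invariant, built as a product of linear forms over
   the group), so by compactness finitely many of them are bounded below there.  Together with
   the hypothesis (2) this bounds every lift v of c(t) by |v| <= C|t|; hence |c_k(t)| <= B|t|^(d_k).
   A C^(d_k) function with such a bound vanishes to order d_k at 0 by Taylor's formula, which gives
   m(c_k) >= d_k. *)

lemma polyfun_local: "polyfun_on I p \<Longrightarrow> (\<forall>i\<in>I. x i = y i) \<Longrightarrow> p x = p y"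
  by (induction rule: polyfun_on.induct) auto

lemma polyfun_cont:
  assumes "polyfun_on I p" "\<And>i. i \<in> I \<Longrightarrow> continuous_on S (\<lambda>t. X t i)"
  shows "continuous_on S (\<lambda>t. p (X t))"
  using assms by (induction rule: polyfun_on.induct) (auto intro!: continuous_intros)

lemma polyfun_sum:
  assumes "finite A" "\<And>a. a \<in> A \<Longrightarrow> polyfun_on I (P a)"
  shows "polyfun_on I (\<lambda>x. \<Sum>a\<in>A. P a x)"
  using assms by (induction A rule: finite_induct) (auto intro: pf_const pf_add)

lemma polyfun_prod:
  assumes "finite A" "\<And>a. a \<in> A \<Longrightarrow> polyfun_on I (P a)"
  shows "polyfun_on I (\<lambda>x. \<Prod>a\<in>A. P a x)"
  using assms by (induction A rule: finite_induct) (auto intro: pf_const pf_mult)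

lemma poly_V_cont:
  assumes "poly_V f"
  shows "continuous_on UNIV f"
proof -
  obtain p where p: "polyfun_on UNIV p" "\<forall>v. f v = p (\<lambda>i. v $ i)"
    using assms unfolding poly_V_def by blast
  have "continuous_on UNIV (\<lambda>v. p (\<lambda>i. v $ i))"
    by (rule polyfun_cont[OF p(1)]) (auto intro!: continuous_intros)
  moreover have "f = (\<lambda>v. p (\<lambda>i. v $ i))" using p(2) by auto
  ultimately show ?thesis by simp
qed

lemma homog_zero: "homog_V d f \<Longrightarrow> d > 0 \<Longrightarrow> f 0 = 0"
  unfolding homog_V_def by (metis vector_smult_lzero mult_zero_left zero_power)

lemma homog_deg0_const: "homog_V 0 f \<Longrightarrow> f v = f 0"
  unfolding homog_V_def by (metis vector_smult_lzero mult_1 power_0)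

lemma norm_ofreal_smult: "norm (complex_of_real r *s (v :: complex^'v)) = \<bar>r\<bar> * norm v"
proof -
  have "complex_of_real r *s v = r *\<^sub>R v"
    unfolding vec_eq_iff vector_scaleR_component vector_smult_component
    by (simp only: scaleR_conv_of_real simp_thms)
  then show ?thesis by simp
qed

lemma unit_decomp:
  fixes v :: "complex ^ 'v"
  assumes "v \<noteq> 0"
  shows "\<exists>u. norm u = 1 \<and> v = complex_of_real (norm v) *s u"
proof (intro exI conjI)
  let ?u = "complex_of_real (1 / norm v) *s v"
  show "norm ?u = 1" using assms by (simp only: norm_ofreal_smult) simp
  have "complex_of_real (norm v) *s ?u = (complex_of_real (norm v) * complex_of_real (1 / norm v)) *s v"
    by (simp add: vector_smult_assoc)
  also have "\<dots> = v" using assms by simp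
  finally show "v = complex_of_real (norm v) *s ?u" by simp
qed

lemma homog_norm:
  assumes "homog_V k f" "norm u = 1"
  shows "norm (f (complex_of_real r *s u)) = \<bar>r\<bar> ^ k * norm (f u)"
  using assms unfolding homog_V_def by (simp add: norm_mult norm_power)

text \<open>A homogeneous polynomial of positive degree k is bounded by a multiple of the k-th power
  of the norm: bound it on the (compact) unit sphere and rescale.\<close>
lemma homog_bound:
  fixes f :: "complex ^ 'v \<Rightarrow> complex"
  assumes "homog_V k f" "k > 0"
  shows "\<exists>B\<ge>0. \<forall>v. norm (f v) \<le> B * norm v ^ k"
proof -
  have "continuous_on UNIV f" using assms poly_V_cont unfolding homog_V_def by blast
  then have "compact (f ` sphere 0 1)"
    by (intro compact_continuous_image) (auto intro: continuous_on_subset)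
  then obtain B where B: "B > 0" "\<forall>y\<in>f ` sphere 0 1. norm y \<le> B"
    using compact_imp_bounded bounded_pos by metis
  have "norm (f v) \<le> B * norm v ^ k" for v
  proof (cases "v = 0")
    case True then show ?thesis using homog_zero[OF assms] assms(2) by (simp add: zero_power)
  next
    case False
    then obtain u where u: "norm u = 1" "v = complex_of_real (norm v) *s u"
      using unit_decomp by blast
    have "norm (f v) = norm v ^ k * norm (f u)"
      using homog_norm[OF assms(1) u(1), of "norm v"] u(2) by simp
    also have "\<dots> \<le> norm v ^ k * B" using B u(1) by (intro mult_left_mono) auto
    finally show ?thesis by (simp add: mult.commute)
  qed
  then show ?thesis using B(1) by (intro exI[of _ B]) auto
qed

lemma polyfun_homog_rescale:
  fixes \<sigma> :: "nat \<Rightarrow> complex ^ 'v \<Rightarrow> complex"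
  assumes \<sigma>_homog: "\<forall>j<n. homog_V (d j) (\<sigma> j)" and f: "homog_V k f"
    and p: "polyfun_on {..<n} p" "\<forall>v. f v = p (\<lambda>j. \<sigma> j v)"
    and \<tau>: "\<tau> \<noteq> 0" and v: "\<forall>j<n. \<sigma> j v = \<tau> ^ d j * y j"
  shows "p (\<lambda>j. \<sigma> j v) = \<tau> ^ k * p y"
proof -
  define w where "w = (1 / \<tau>) *s v"
  have vw: "v = \<tau> *s w" using \<tau> by (simp add: w_def vector_smult_assoc)
  have "\<sigma> j w = y j" if "j < n" for j
  proof -
    have "\<sigma> j v = \<tau> ^ d j * \<sigma> j w" using \<sigma>_homog that vw unfolding homog_V_def by simp
    then show ?thesis using v that \<tau> by simp
  qed
  then have "f w = p y" using p polyfun_local[OF p(1), of "\<lambda>j. \<sigma> j w" y] by simp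
  moreover have "f v = \<tau> ^ k * f w" using f vw unfolding homog_V_def by simp
  ultimately show ?thesis using p(2) by simp
qed

subsection \<open>The multiplicity at 0\<close>

definition factors_at0 :: "real \<Rightarrow> nat \<Rightarrow> (real \<Rightarrow> complex) \<Rightarrow> (real \<Rightarrow> complex) \<Rightarrow> bool" where
  "factors_at0 e k g h \<longleftrightarrow>
     continuous_on (ball 0 e) h \<and> (\<forall>t\<in>ball 0 e. g t = (complex_of_real t) ^ k * h t)"

lemma mult0_factors_at0: "mult0 g = Sup {enat k | k. \<exists>h e. e > 0 \<and> factors_at0 e k g h}"
  unfolding mult0_def factors_at0_def by simp

lemma factors_at0_mono:
  assumes "factors_at0 e k g h" "e' \<le> e"
  shows "factors_at0 e' k g h"
proof -
  have sub: "ball 0 e' \<subseteq> ball 0 e" using assms(2) by (rule subset_ball)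
  then show ?thesis using assms(1) continuous_on_subset[OF _ sub] unfolding factors_at0_def by blast
qed

lemma mult0_ge_intro:
  assumes "e > 0" "factors_at0 e k g h"
  shows "enat k \<le> mult0 g"
  unfolding mult0_factors_at0 by (rule Sup_upper) (use assms in blast)

text \<open>Conversely, a multiplicity of at least k > 0 yields a factorization by t^k: the supremum
  is attained up to the integer k, and a factor t^p with p >= k can be split as t^k t^(p-k).\<close>
lemma mult0_ge_elim:
  assumes "k > 0" "enat k \<le> mult0 g"
  shows "\<exists>h e. e > 0 \<and> factors_at0 e k g h"
proof -
  let ?P = "{enat p | p. \<exists>h e. e > 0 \<and> factors_at0 e p g h}"
  have "\<exists>x\<in>?P. enat k \<le> x"
  proof (rule ccontr)
    assume "\<not> ?thesis"
    then have "\<forall>x\<in>?P. x \<le> enat (k - 1)"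
      using assms(1) by (auto simp: not_le) (metis Suc_pred enat_ord_simps(2) less_Suc_eq_le)
    then have "Sup ?P \<le> enat (k - 1)" by (intro Sup_least) blast
    then have "enat k \<le> enat (k - 1)"
      using assms(2) unfolding mult0_factors_at0 by (rule order.trans[rotated])
    then show False using assms(1) by simp
  qed
  then obtain p h e where p: "k \<le> p" "e > 0" "factors_at0 e p g h" by auto
  have "factors_at0 e k g (\<lambda>t. (complex_of_real t) ^ (p - k) * h t)"
    unfolding factors_at0_def
  proof
    show "continuous_on (ball 0 e) (\<lambda>t. (complex_of_real t) ^ (p - k) * h t)"
      using p(3) unfolding factors_at0_def by (auto intro!: continuous_intros)
    show "\<forall>t\<in>ball 0 e. g t = (complex_of_real t) ^ k * ((complex_of_real t) ^ (p - k) * h t)"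
      using p(1,3) unfolding factors_at0_def by (metis le_add_diff_inverse mult.assoc power_add)
  qed
  then show ?thesis using p(2) by blast
qed

lemma mult0_imp_bound:
  assumes "k > 0" "enat k \<le> mult0 g"
  shows "\<exists>e M. e > 0 \<and> M \<ge> 0 \<and> (\<forall>t. \<bar>t\<bar> < e \<longrightarrow> norm (g t) \<le> M * \<bar>t\<bar> ^ k)"
proof -
  obtain h \<epsilon> where \<epsilon>: "\<epsilon> > 0" and "factors_at0 \<epsilon> k g h"
    using mult0_ge_elim[OF assms] by blast
  then have h: "\<epsilon> > 0" "continuous_on (ball 0 \<epsilon>) h"
    "\<forall>t\<in>ball 0 \<epsilon>. g t = (complex_of_real t) ^ k * h t"
    unfolding factors_at0_def by auto
  have "compact (h ` cball 0 (\<epsilon>/2))"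
    by (rule compact_continuous_image) (use h(1,2) in \<open>auto intro: continuous_on_subset\<close>)
  then obtain M where M: "M > 0" "\<forall>y\<in>h ` cball 0 (\<epsilon>/2). norm y \<le> M"
    using compact_imp_bounded bounded_pos by metis
  have "norm (g t) \<le> M * \<bar>t\<bar> ^ k" if t: "\<bar>t\<bar> < \<epsilon>/2" for t :: real
  proof -
    have "norm (g t) = \<bar>t\<bar> ^ k * norm (h t)" using h(3) t by (simp add: norm_mult norm_power)
    also have "\<dots> \<le> \<bar>t\<bar> ^ k * M" using M t by (intro mult_left_mono) auto
    finally show ?thesis by (simp add: mult.commute)
  qed
  then show ?thesis using M(1) h(1) by (intro exI[of _ "\<epsilon>/2"] exI[of _ M]) auto
qed

lemma common_radius:
  fixes P :: "'a \<Rightarrow> real \<Rightarrow> bool"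
  assumes "finite A" "\<forall>a\<in>A. \<exists>e>0. P a e"
    and mono: "\<And>a e e'. a \<in> A \<Longrightarrow> P a e \<Longrightarrow> 0 < e' \<Longrightarrow> e' \<le> e \<Longrightarrow> P a e'"
  shows "\<exists>e>0. \<forall>a\<in>A. P a e"
proof -
  obtain E where E: "\<forall>a\<in>A. E a > 0 \<and> P a (E a)" using assms(2) by metis
  define e where "e = Min (insert 1 (E ` A))"
  have "e > 0" "\<forall>a\<in>A. e \<le> E a" using E assms(1) by (auto simp: e_def)
  then show ?thesis using E mono by blast
qed

subsection \<open>Flat functions of class C^m\<close>

text \<open>Taylor's formula with Lagrange remainder, in limit form: if g and its first n-1 derivatives
  vanish at 0 and the n-th derivative is continuous there, then g(t)/t^n tends to g^(n)(0)/n!.\<close>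
lemma taylor_lim_real:
  fixes g :: "nat \<Rightarrow> real \<Rightarrow> real"
  assumes e: "e > 0" and n: "n > 0"
    and der: "\<forall>m<n. \<forall>t. \<bar>t\<bar> \<le> e \<longrightarrow> DERIV (g m) t :> g (Suc m) t"
    and cont: "isCont (g n) 0" and z: "\<forall>j<n. g j 0 = 0"
  shows "((\<lambda>t. g 0 t / t^n) \<longlongrightarrow> g n 0 / fact n) (at 0)"
  unfolding LIM_eq
proof (intro allI impI)
  fix r :: real assume r: "r > 0"
  have "r * fact n > 0" using r by simp
  then obtain s where s: "s > 0" "\<forall>x. x \<noteq> 0 \<and> norm (x - 0) < s \<longrightarrow> norm (g n x - g n 0) < r * fact n"
    using cont[unfolded isCont_def LIM_eq] by blast
  show "\<exists>s>0. \<forall>x. x \<noteq> 0 \<and> norm (x - 0) < s \<longrightarrow> norm (g 0 x / x ^ n - g n 0 / fact n) < r"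
  proof (intro exI[of _ "min s e"] conjI allI impI)
    fix x :: real assume x: "x \<noteq> 0 \<and> norm (x - 0) < min s e"
    have "\<exists>t. (if x < 0 then x < t \<and> t < 0 else 0 < t \<and> t < x) \<and>
      g 0 x = (\<Sum>m<n. (g m 0 / fact m) * (x - 0)^m) + (g n t / fact n) * (x - 0)^n"
      by (rule Taylor[of n g "g 0" "-e" e 0 x]) (use n der x e in auto)
    then obtain t where t0: "if x < 0 then x < t \<and> t < 0 else 0 < t \<and> t < x"
      "g 0 x = (\<Sum>m<n. (g m 0 / fact m) * (x - 0)^m) + (g n t / fact n) * (x - 0)^n"
      by blast
    have t: "\<bar>t\<bar> < \<bar>x\<bar>" using t0(1) by (auto split: if_splits)
    have "g 0 x = (g n t / fact n) * x^n" using t0(2) z by simp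
    then have "g 0 x / x ^ n - g n 0 / fact n = (g n t - g n 0) / fact n"
      using x by (simp add: field_simps)
    moreover have "\<bar>g n t - g n 0\<bar> < r * fact n"
      using s(2)[rule_format, of t] t x r by (cases "t = 0") auto
    ultimately show "norm (g 0 x / x ^ n - g n 0 / fact n) < r"
      by (simp add: abs_divide divide_less_eq)
  qed (use s e in auto)
qed

lemma taylor_lim:
  fixes D :: "nat \<Rightarrow> real \<Rightarrow> complex"
  assumes e: "e > 0" and n: "n > 0"
    and der: "\<forall>m<n. \<forall>t. \<bar>t\<bar> \<le> e \<longrightarrow> (D m has_vector_derivative D (Suc m) t) (at t)"
    and cont: "isCont (D n) 0" and z: "\<forall>j<n. D j 0 = 0"
  shows "((\<lambda>t. D 0 t / (complex_of_real t)^n) \<longlongrightarrow> D n 0 / fact n) (at 0)"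
proof -
  have re: "((\<lambda>t. Re (D 0 t) / t^n) \<longlongrightarrow> Re (D n 0) / fact n) (at 0)"
    using taylor_lim_real[of e n "\<lambda>m t. Re (D m t)"] e n der cont z has_field_derivative_Re
    by (auto intro: continuous_intros)
  have im: "((\<lambda>t. Im (D 0 t) / t^n) \<longlongrightarrow> Im (D n 0) / fact n) (at 0)"
    using taylor_lim_real[of e n "\<lambda>m t. Im (D m t)"] e n der cont z has_field_derivative_Im
    by (auto intro: continuous_intros)
  have r: "(complex_of_real t)^n = complex_of_real (t^n)" for t by simp
  have f: "(fact n :: complex) = complex_of_real (fact n)" by simp
  show ?thesis unfolding tendsto_complex_iff r f Re_divide_of_real Im_divide_of_real
    using re im by simp
qed

text \<open>If a function of class C^m near 0 is O(|t|^m), then its derivatives of order < m vanish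
  at 0: otherwise the lowest nonvanishing one would force D_0(t)/t^j to a nonzero limit.\<close>
lemma flat_derivs_vanish:
  fixes D :: "nat \<Rightarrow> real \<Rightarrow> complex"
  assumes e: "e > 0"
    and der: "\<forall>j<m. \<forall>t. \<bar>t\<bar> \<le> e \<longrightarrow> (D j has_vector_derivative D (Suc j) t) (at t)"
    and bnd: "\<forall>t. \<bar>t\<bar> < e \<longrightarrow> norm (D 0 t) \<le> K * \<bar>t\<bar>^m"
    and j: "j < m"
  shows "D j 0 = 0"
  using j
proof (induction j rule: less_induct)
  case (less j)
  show "D j 0 = 0"
  proof (cases "j = 0")
    case True
    then show ?thesis using bnd[rule_format, of 0] e less.prems by (simp add: zero_power)
  next
    case False
    have "(D j has_vector_derivative D (Suc j) 0) (at 0)" using der less.prems e by simp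
    then have ic: "isCont (D j) 0" by (rule has_vector_derivative_continuous)
    have der_j: "\<forall>i<j. \<forall>t. \<bar>t\<bar> \<le> e \<longrightarrow> (D i has_vector_derivative D (Suc i) t) (at t)"
      using der less.prems by simp
    have zero_j: "\<forall>i<j. D i 0 = 0" using less.IH less.prems by simp
    have lim: "((\<lambda>t. D 0 t / (complex_of_real t)^j) \<longlongrightarrow> D j 0 / fact j) (at 0)"
      using taylor_lim[OF e _ der_j ic zero_j] False by simp
    have "((\<lambda>t. D 0 t / (complex_of_real t)^j) \<longlongrightarrow> 0) (at 0)"
    proof (rule Lim_null_comparison)
      have "eventually (\<lambda>t. t \<noteq> 0 \<and> \<bar>t\<bar> < e) (at (0::real))"
        using e by (auto simp: eventually_at intro!: exI[of _ e])
      then show "eventually (\<lambda>t. norm (D 0 t / (complex_of_real t)^j) \<le> K * \<bar>t\<bar>^(m - j)) (at 0)"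
      proof (rule eventually_mono)
        fix t :: real assume t: "t \<noteq> 0 \<and> \<bar>t\<bar> < e"
        have "norm (D 0 t / (complex_of_real t)^j) = norm (D 0 t) / \<bar>t\<bar>^j"
          by (simp add: norm_divide norm_power)
        also have "\<dots> \<le> K * \<bar>t\<bar>^m / \<bar>t\<bar>^j"
          using bnd t by (intro divide_right_mono) auto
        also have "\<dots> = K * \<bar>t\<bar>^(m - j)"
          using t less.prems by (simp add: power_diff)
        finally show "norm (D 0 t / (complex_of_real t)^j) \<le> K * \<bar>t\<bar>^(m - j)" .
      qed
      have "((\<lambda>t. K * \<bar>t\<bar>^(m - j)) \<longlongrightarrow> K * \<bar>0\<bar>^(m - j)) (at (0::real))"
        by (intro tendsto_intros)
      then show "((\<lambda>t. K * \<bar>t\<bar>^(m - j)) \<longlongrightarrow> 0) (at (0::real))"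
        using less.prems by (simp add: zero_power)
    qed
    then have "D j 0 / fact j = 0" using tendsto_unique[OF _ lim] by simp
    then show ?thesis by simp
  qed
qed

lemma flat_factor:
  fixes D :: "nat \<Rightarrow> real \<Rightarrow> complex"
  assumes e: "e > 0" and m: "m > 0"
    and der: "\<forall>j<m. \<forall>t. \<bar>t\<bar> \<le> e \<longrightarrow> (D j has_vector_derivative D (Suc j) t) (at t)"
    and cont: "isCont (D m) 0" and bnd: "\<forall>t. \<bar>t\<bar> < e \<longrightarrow> norm (D 0 t) \<le> K * \<bar>t\<bar>^m"
  shows "\<exists>h. continuous_on (ball 0 e) h \<and> (\<forall>t\<in>ball 0 e. D 0 t = (complex_of_real t) ^ m * h t)"
proof -
  have zero: "\<forall>j<m. D j 0 = 0" using flat_derivs_vanish[OF e der bnd] by blast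
  have lim: "((\<lambda>t. D 0 t / (complex_of_real t)^m) \<longlongrightarrow> D m 0 / fact m) (at 0)"
    by (rule taylor_lim[OF e m]) (use der cont zero in auto)
  define h where "h t = (if t = 0 then D m 0 / fact m else D 0 t / (complex_of_real t)^m)" for t
  have "isCont h t" if t: "t \<in> ball 0 e" for t
  proof (cases "t = 0")
    case True
    have "eventually (\<lambda>x. D 0 x / (complex_of_real x)^m = h x) (at (0::real))"
      by (auto simp: h_def eventually_at intro!: exI[of _ 1])
    then have "(h \<longlongrightarrow> D m 0 / fact m) (at 0)" using lim by (rule tendsto_cong[THEN iffD1])
    then have "(h \<longlongrightarrow> h 0) (at 0)" by (simp add: h_def)
    then show ?thesis using True by (simp add: isCont_def)
  next
    case False
    have "(D 0 has_vector_derivative D (Suc 0) t) (at t)" using der m t by simp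
    then have "isCont (D 0) t" by (rule has_vector_derivative_continuous)
    then have "isCont (\<lambda>x. D 0 x / (complex_of_real x)^m) t"
      using False by (auto intro!: continuous_intros)
    moreover have "eventually (\<lambda>x. h x = D 0 x / (complex_of_real x)^m) (nhds t)"
      using t1_space_nhds[OF False] by (rule eventually_mono) (simp add: h_def)
    ultimately show ?thesis by (simp add: isCont_cong)
  qed
  then have "continuous_on (ball 0 e) h" by (simp add: continuous_at_imp_continuous_on)
  moreover have "\<forall>t\<in>ball 0 e. D 0 t = (complex_of_real t) ^ m * h t"
    using zero m by (auto simp: h_def)
  ultimately show ?thesis by blast
qed

lemma Ck_on_near_zero:
  assumes "Ck_on m I f" "open I" "0 \<in> I" "j \<le> m"
  obtains D e where "e > 0" "\<forall>t. \<bar>t\<bar> \<le> e \<longrightarrow> D 0 t = f t"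
    "\<forall>i<j. \<forall>t. \<bar>t\<bar> \<le> e \<longrightarrow> (D i has_vector_derivative D (Suc i) t) (at t)"
    "isCont (D j) 0"
proof -
  obtain D where D: "\<forall>t\<in>I. D 0 t = f t"
    "\<forall>i<m. \<forall>t\<in>I. (D i has_vector_derivative D (Suc i) t) (at t)" "continuous_on I (D m)"
    using assms(1) unfolding Ck_on_def by blast
  obtain e where e: "e > 0" "cball 0 e \<subseteq> I"
    using assms(2,3) open_contains_cball by blast
  have tI: "t \<in> I" if "\<bar>t\<bar> \<le> e" for t using e(2) that by (auto simp: dist_real_def)
  have "isCont (D j) 0"
  proof (cases "j < m")
    case True
    then have "(D j has_vector_derivative D (Suc j) 0) (at 0)" using D(2) assms(3) by blast
    then show ?thesis by (rule has_vector_derivative_continuous)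
  next
    case False
    then have "j = m" using assms(4) by simp
    then show ?thesis using assms(2,3) D(3) continuous_on_eq_continuous_at by blast
  qed
  moreover have "\<forall>i<j. \<forall>t. \<bar>t\<bar> \<le> e \<longrightarrow> (D i has_vector_derivative D (Suc i) t) (at t)"
    using D(2) tI assms(4) by simp
  moreover have "\<forall>t. \<bar>t\<bar> \<le> e \<longrightarrow> D 0 t = f t" using D(1) tI by simp
  ultimately show ?thesis using that[of e D] e(1) by blast
qed

lemma mult0_of_flat_Ck:
  assumes "Ck_on m I f" "open I" "0 \<in> I" "j \<le> m"
    and e: "e > 0" and bnd: "\<forall>t. \<bar>t\<bar> < e \<longrightarrow> norm (f t) \<le> K * \<bar>t\<bar>^j"
  shows "enat j \<le> mult0 f"
proof (cases "j = 0")
  case True then show ?thesis by (simp add: zero_enat_def[symmetric])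
next
  case False
  obtain D e' where D: "e' > 0" "\<forall>t. \<bar>t\<bar> \<le> e' \<longrightarrow> D 0 t = f t"
    "\<forall>i<j. \<forall>t. \<bar>t\<bar> \<le> e' \<longrightarrow> (D i has_vector_derivative D (Suc i) t) (at t)"
    "isCont (D j) 0"
    by (rule Ck_on_near_zero[OF assms(1-4)])
  define r where "r = min e e'"
  have r: "r > 0" using e D(1) by (simp add: r_def)
  have "\<exists>h. continuous_on (ball 0 r) h \<and> (\<forall>t\<in>ball 0 r. D 0 t = (complex_of_real t) ^ j * h t)"
  proof (rule flat_factor[OF r])
    show "0 < j" using False by simp
    show "\<forall>i<j. \<forall>t. \<bar>t\<bar> \<le> r \<longrightarrow> (D i has_vector_derivative D (Suc i) t) (at t)"
      using D(3) by (simp add: r_def)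
    show "isCont (D j) 0" by (rule D(4))
    show "\<forall>t. \<bar>t\<bar> < r \<longrightarrow> norm (D 0 t) \<le> K * \<bar>t\<bar> ^ j"
      using D(2) bnd unfolding r_def by force
  qed
  then obtain h where h: "continuous_on (ball 0 r) h"
    "\<forall>t\<in>ball 0 r. D 0 t = (complex_of_real t) ^ j * h t" by blast
  show ?thesis
  proof (rule mult0_ge_intro[OF r(1)], unfold factors_at0_def, intro conjI ballI)
    show "continuous_on (ball 0 r) h" by (rule h(1))
    fix t :: real assume t: "t \<in> ball 0 r"
    then have "\<bar>t\<bar> \<le> e'" by (simp add: r_def)
    then have "f t = D 0 t" using D(2) by simp
    also have "\<dots> = (complex_of_real t) ^ j * h t" using h(2) t by blast
    finally show "f t = (complex_of_real t) ^ j * h t" .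
  qed
qed

subsection \<open>Invariants of a finite matrix group separate the null cone\<close>

text \<open>For finitely many nonzero vectors there is a linear form l_s(w) = sum_i w_i s^i
  (coordinates enumerated by to_nat) vanishing on none of them: each excludes finitely many s.\<close>
lemma lin_form_exists:
  fixes W :: "(complex ^ 'v) set"
  assumes "finite W" "0 \<notin> W"
  shows "\<exists>s::complex. \<forall>w\<in>W. (\<Sum>i\<in>UNIV. w $ i * s ^ to_nat i) \<noteq> 0"
proof -
  define q where "q w = (\<Sum>i\<in>UNIV. monom (w $ i) (to_nat i))" for w :: "complex ^ 'v"
  have pq: "poly (q w) s = (\<Sum>i\<in>UNIV. w $ i * s ^ to_nat i)" for w s
    by (simp add: q_def poly_sum poly_monom)
  have qnz: "q w \<noteq> 0" if "w \<noteq> 0" for w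
  proof -
    obtain i0 where i0: "w $ i0 \<noteq> 0" using \<open>w \<noteq> 0\<close> by (metis vec_eq_iff zero_index)
    have "coeff (q w) (to_nat i0) = (\<Sum>i\<in>UNIV. if to_nat i0 = to_nat i then w $ i else 0)"
      by (simp add: q_def coeff_sum coeff_monom)
    also have "\<dots> = (\<Sum>i\<in>{i0}. w $ i)"
      by (rule sum.mono_neutral_cong_right) (auto dest: injD[OF inj_to_nat])
    finally have "coeff (q w) (to_nat i0) \<noteq> 0" using i0 by simp
    then show ?thesis by auto
  qed
  have "finite {s. poly (q w) s = 0}" if "w \<in> W" for w
  proof -
    have "w \<noteq> 0" using that assms(2) by blast
    then show ?thesis by (intro poly_roots_finite qnz)
  qed
  then have "finite (\<Union>w\<in>W. {s. poly (q w) s = 0})" using assms(1) by blast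
  then obtain s where "s \<notin> (\<Union>w\<in>W. {s. poly (q w) s = 0})"
    using ex_new_if_finite[OF infinite_UNIV_char_0] by blast
  then show ?thesis using pq by auto
qed

text \<open>The product of a function over a G-orbit is G-invariant, since right multiplication by
  an element of G permutes the finite group G.\<close>
lemma orbit_prod_invariant:
  fixes G :: "(complex ^ 'v ^ 'v) set" and l :: "complex ^ 'v \<Rightarrow> complex"
  assumes G_fin: "finite G" and G_mult: "\<forall>A\<in>G. \<forall>B\<in>G. A ** B \<in> G"
    and G_inv: "\<forall>A\<in>G. invertible A" and B: "B \<in> G"
  shows "(\<Prod>A\<in>G. l (A *v (B *v x))) = (\<Prod>A\<in>G. l (A *v x))"
proof -
  have "invertible B" using G_inv B by simp
  then obtain B' where B': "B ** B' = mat 1" unfolding invertible_def by auto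
  have inj: "inj_on (\<lambda>A. A ** B) G"
  proof
    fix A1 A2 assume "A1 ** B = A2 ** B"
    then have "A1 ** (B ** B') = A2 ** (B ** B')" by (simp only: matrix_mul_assoc)
    then show "A1 = A2" using B' by simp
  qed
  have img: "(\<lambda>A. A ** B) ` G = G"
    by (rule card_subset_eq[OF G_fin]) (use G_mult B in \<open>auto simp: card_image[OF inj]\<close>)
  have "(\<Prod>A\<in>G. l (A *v (B *v x))) = (\<Prod>A\<in>G. l ((A ** B) *v x))"
    by (simp add: matrix_vector_mul_assoc)
  also have "\<dots> = (\<Prod>A\<in>(\<lambda>A. A ** B) ` G. l (A *v x))"
    by (rule prod.reindex[OF inj, symmetric, unfolded comp_def])
  finally show ?thesis by (simp add: img)
qed

text \<open>Every nonzero vector is separated from 0 by an invariant: the product over G of a linear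
  form not vanishing on the orbit of v.\<close>
lemma invariant_separates_zero:
  fixes G :: "(complex ^ 'v ^ 'v) set"
  assumes G_fin: "finite G" and G_one: "mat 1 \<in> G"
    and G_mult: "\<forall>A\<in>G. \<forall>B\<in>G. A ** B \<in> G" and G_inv: "\<forall>A\<in>G. invertible A"
    and v: "v \<noteq> 0"
  shows "\<exists>f\<in>inv_ring G. f 0 = 0 \<and> f v \<noteq> 0"
proof -
  have "A *v v \<noteq> 0" if "A \<in> G" for A
  proof
    assume Av: "A *v v = 0"
    have "invertible A" using G_inv that by simp
    then obtain A' where "A' ** A = mat 1" unfolding invertible_def by auto
    then have "v = A' *v (A *v v)" by (simp add: matrix_vector_mul_assoc)
    with Av v show False by simp
  qed
  then have "0 \<notin> (\<lambda>A. A *v v) ` G" by force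
  then obtain s :: complex where s: "\<forall>w\<in>(\<lambda>A. A *v v) ` G. (\<Sum>i\<in>UNIV. w $ i * s ^ to_nat i) \<noteq> 0"
    using lin_form_exists G_fin by blast
  define l where "l x = (\<Sum>i\<in>UNIV. x $ i * s ^ to_nat i)" for x :: "complex ^ 'v"
  define f where "f x = (\<Prod>A\<in>G. l (A *v x))" for x
  have "poly_V f"
    unfolding poly_V_def
  proof (intro exI conjI allI)
    show "polyfun_on UNIV (\<lambda>y. \<Prod>A\<in>G. \<Sum>i\<in>UNIV. (\<Sum>j\<in>UNIV. A $ i $ j * y j) * s ^ to_nat i)"
      using G_fin by (intro polyfun_prod polyfun_sum pf_mult pf_const pf_coord) auto
    show "f x = (\<Prod>A\<in>G. \<Sum>i\<in>UNIV. (\<Sum>j\<in>UNIV. A $ i $ j * (x $ j)) * s ^ to_nat i)" for x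
      by (simp add: f_def l_def matrix_vector_mult_def)
  qed
  moreover have "f (B *v x) = f x" if "B \<in> G" for B x
    unfolding f_def using orbit_prod_invariant[OF G_fin G_mult G_inv that] .
  ultimately have "f \<in> inv_ring G" by (auto simp: inv_ring_def)
  moreover have "f 0 = 0"
    unfolding f_def by (rule prod_zero[OF G_fin], rule bexI[OF _ G_one]) (simp add: l_def)
  moreover have "f v \<noteq> 0" using G_fin s by (auto simp: f_def l_def)
  ultimately show ?thesis by blast
qed

lemma generators_separate_zero:
  fixes G :: "(complex ^ 'v ^ 'v) set" and \<sigma> :: "nat \<Rightarrow> complex ^ 'v \<Rightarrow> complex"
  assumes G_fin: "finite G" and G_one: "mat 1 \<in> G"
    and G_mult: "\<forall>A\<in>G. \<forall>B\<in>G. A ** B \<in> G" and G_inv: "\<forall>A\<in>G. invertible A"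
    and \<sigma>_gen: "\<forall>f \<in> inv_ring G. \<exists>p. polyfun_on {..<n} p \<and> (\<forall>v. f v = p (\<lambda>j. \<sigma> j v))"
    and v: "v \<noteq> 0"
  shows "\<exists>j<n. \<sigma> j v \<noteq> \<sigma> j 0"
proof (rule ccontr)
  assume same: "\<not> ?thesis"
  obtain f where f: "f \<in> inv_ring G" "f 0 = 0" "f v \<noteq> 0"
    using invariant_separates_zero[OF G_fin G_one G_mult G_inv v] by blast
  obtain p where p: "polyfun_on {..<n} p" "\<forall>v. f v = p (\<lambda>j. \<sigma> j v)" using \<sigma>_gen f(1) by blast
  have "f v = f 0" using p same polyfun_local[OF p(1), of "\<lambda>j. \<sigma> j v" "\<lambda>j. \<sigma> j 0"] by simp
  with f show False by simp
qed

text \<open>In a minimal system of homogeneous generators no generator has degree 0: it would be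
  constant, i.e. a polynomial in the other generators.\<close>
lemma minimal_generator_degree_pos:
  fixes \<sigma> :: "nat \<Rightarrow> complex ^ 'v \<Rightarrow> complex"
  assumes "homog_V (d k) (\<sigma> k)"
    and "\<not> (\<exists>p. polyfun_on ({..<n} - {k}) p \<and> (\<forall>v. \<sigma> k v = p (\<lambda>j. \<sigma> j v)))"
  shows "d k > 0"
proof (rule ccontr)
  assume "\<not> d k > 0"
  then have "homog_V 0 (\<sigma> k)" using assms(1) by simp
  then have "\<forall>v. \<sigma> k v = (\<lambda>x. \<sigma> k 0) (\<lambda>j. \<sigma> j v)" using homog_deg0_const by blast
  then show False using assms(2) pf_const by blast
qed

lemma ideal_gen_vanish:
  assumes "f \<in> ideal_gen R S" "\<forall>s\<in>S. s v = 0"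
  shows "f v = 0"
  using assms by (induction rule: ideal_gen.induct) auto

lemma nullcone_ideal_generators_detect:
  fixes G :: "(complex ^ 'v ^ 'v) set" and \<sigma> :: "nat \<Rightarrow> complex ^ 'v \<Rightarrow> complex"
  assumes G_fin: "finite G" and G_one: "mat 1 \<in> G"
    and G_mult: "\<forall>A\<in>G. \<forall>B\<in>G. A ** B \<in> G" and G_inv: "\<forall>A\<in>G. invertible A"
    and \<sigma>_gen: "\<forall>f \<in> inv_ring G. \<exists>p. polyfun_on {..<n} p \<and> (\<forall>v. f v = p (\<lambda>j. \<sigma> j v))"
    and \<sigma>0: "\<forall>j<n. \<sigma> j 0 = 0"
    and J_zero: "\<forall>v. (\<forall>f\<in>J. f v = 0) \<longleftrightarrow> (\<forall>k<n. \<sigma> k v = 0)"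
    and J: "J = ideal_gen R S" and v: "v \<noteq> 0"
  shows "\<exists>s\<in>S. s v \<noteq> 0"
proof -
  from generators_separate_zero[OF G_fin G_one G_mult G_inv \<sigma>_gen v]
  obtain j where "j < n" "\<sigma> j v \<noteq> 0" using \<sigma>0 by auto
  then have "\<not> (\<forall>f\<in>J. f v = 0)" using J_zero[rule_format, of v] by blast
  then obtain f where "f \<in> ideal_gen R S" "f v \<noteq> 0" using J by blast
  then show ?thesis using ideal_gen_vanish[of f R S v] by blast
qed

subsection \<open>From multiplicities of the coordinates to multiplicities of invariants\<close>

lemma common_factorization:
  fixes c :: "'a \<Rightarrow> real \<Rightarrow> complex" and d :: "'a \<Rightarrow> nat"
  assumes A: "finite A" and mult: "\<forall>j\<in>A. d j > 0 \<and> enat (d j) \<le> mult0 (c j)" and e0: "e0 > 0"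
  shows "\<exists>e>0. e \<le> e0 \<and> (\<exists>H. \<forall>j\<in>A. factors_at0 e (d j) (c j) (H j))"
proof -
  have "\<exists>e>0. \<forall>j\<in>A. \<exists>h. factors_at0 e (d j) (c j) h"
  proof (rule common_radius[OF A])
    show "\<forall>j\<in>A. \<exists>e>0. \<exists>h. factors_at0 e (d j) (c j) h"
    proof
      fix j assume "j \<in> A"
      then have "d j > 0" "enat (d j) \<le> mult0 (c j)" using mult by simp_all
      from mult0_ge_elim[OF this] show "\<exists>e>0. \<exists>h. factors_at0 e (d j) (c j) h" by blast
    qed
    show "\<exists>h. factors_at0 e' (d j) (c j) h"
      if "\<exists>h. factors_at0 e (d j) (c j) h" "0 < e'" "e' \<le> e" for j e e'
      using that factors_at0_mono by blast
  qed
  then obtain e where e: "e > 0" "\<forall>j\<in>A. \<exists>h. factors_at0 e (d j) (c j) h" by blast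
  from bchoice[OF e(2)] obtain H where H: "\<forall>j\<in>A. factors_at0 e (d j) (c j) (H j)" by blast
  show ?thesis
  proof (intro exI conjI)
    show "min e e0 > 0" "min e e0 \<le> e0" using e(1) e0 by simp_all
    show "\<forall>j\<in>A. factors_at0 (min e e0) (d j) (c j) (H j)"
      using H factors_at0_mono[OF _ min.cobounded1] by blast
  qed
qed

text \<open>Pointwise form of the rescaling identity, including tau = 0: there both sides vanish,
  as all generators and f have positive degree.\<close>
lemma polyfun_at_factored_point:
  fixes \<sigma> :: "nat \<Rightarrow> complex ^ 'v \<Rightarrow> complex"
  assumes \<sigma>_homog: "\<forall>j<n. homog_V (d j) (\<sigma> j)" and dpos: "\<forall>j<n. d j > 0"
    and f: "homog_V k f" "k > 0" and p: "polyfun_on {..<n} p" "\<forall>v. f v = p (\<lambda>j. \<sigma> j v)"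
    and x_lift: "\<forall>j<n. x j = \<sigma> j v" and x_factor: "\<forall>j<n. x j = \<tau> ^ d j * y j"
  shows "p x = \<tau> ^ k * p y"
proof (cases "\<tau> = 0")
  case True
  have "\<sigma> j 0 = 0" if "j < n" for j using homog_zero \<sigma>_homog dpos that by blast
  then have "p x = p (\<lambda>j. \<sigma> j 0)"
    using polyfun_local[OF p(1)] x_factor True dpos by (simp add: zero_power)
  also have "\<dots> = 0" using p(2) homog_zero[OF f] by simp
  finally show ?thesis using True f(2) by (simp add: zero_power)
next
  case False
  have "p x = p (\<lambda>j. \<sigma> j v)" using polyfun_local[OF p(1)] x_lift by simp
  also have "\<dots> = \<tau> ^ k * p y"
    by (rule polyfun_homog_rescale[OF \<sigma>_homog f(1) p False]) (use x_lift x_factor in simp)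
  finally show ?thesis .
qed

lemma mult0_invariant_along_curve:
  fixes \<sigma> :: "nat \<Rightarrow> complex ^ 'v \<Rightarrow> complex" and c :: "nat \<Rightarrow> real \<Rightarrow> complex"
  assumes \<sigma>_homog: "\<forall>j<n. homog_V (d j) (\<sigma> j)" and dpos: "\<forall>j<n. d j > 0"
    and I: "open I" "0 \<in> I" and c_in: "\<forall>t\<in>I. \<exists>v. \<forall>j<n. c j t = \<sigma> j v"
    and c_mult: "\<forall>j<n. enat (d j) \<le> mult0 (c j)"
    and f: "homog_V k f" and p: "polyfun_on {..<n} p" "\<forall>v. f v = p (\<lambda>j. \<sigma> j v)"
  shows "enat k \<le> mult0 (\<lambda>t. p (\<lambda>j. c j t))"
proof (cases "k = 0")
  case True then show ?thesis by (simp add: zero_enat_def[symmetric])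
next
  case False
  obtain eI where eI: "eI > 0" "ball 0 eI \<subseteq> I" by (rule openE[OF I])
  have "\<forall>j\<in>{..<n}. d j > 0 \<and> enat (d j) \<le> mult0 (c j)" using dpos c_mult by simp
  from common_factorization[OF finite_lessThan this eI(1)] obtain r H where
    r: "r > 0" "r \<le> eI" and "\<forall>j\<in>{..<n}. factors_at0 r (d j) (c j) (H j)" by blast
  then have H: "\<forall>j\<in>{..<n}. continuous_on (ball 0 r) (H j) \<and>
                      (\<forall>t\<in>ball 0 r. c j t = (complex_of_real t) ^ d j * H j t)"
    unfolding factors_at0_def by blast
  have r_I: "ball 0 r \<subseteq> I" using subset_ball[OF r(2)] eI(2) by blast
  show ?thesis
  proof (rule mult0_ge_intro[OF r(1)], unfold factors_at0_def, intro conjI)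
    show "continuous_on (ball 0 r) (\<lambda>t. p (\<lambda>j. H j t))"
      using H by (intro polyfun_cont[OF p(1)]) blast
    show "\<forall>t\<in>ball 0 r. p (\<lambda>j. c j t) = (complex_of_real t) ^ k * p (\<lambda>j. H j t)"
    proof
      fix t :: real assume t: "t \<in> ball 0 r"
      obtain v where v: "\<forall>j<n. c j t = \<sigma> j v" using c_in r_I t by blast
      have factor: "\<forall>j<n. c j t = (complex_of_real t) ^ d j * H j t" using H t by blast
      have "k > 0" using False by simp
      from polyfun_at_factored_point[OF \<sigma>_homog dpos f this p v factor]
      show "p (\<lambda>j. c j t) = (complex_of_real t) ^ k * p (\<lambda>j. H j t)" .
    qed
  qed
qed

subsection \<open>From multiplicities of invariants back to the coordinates\<close>

text \<open>Continuous functions without common zero on the unit sphere: by compactness, finitely many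
  of them already have, at every unit vector, one of absolute value above a fixed delta > 0.\<close>
lemma finite_nonvanishing_subfamily:
  fixes S :: "('a::euclidean_space \<Rightarrow> 'b::real_normed_vector) set"
  assumes cont: "\<forall>s\<in>S. continuous_on UNIV s" and nz: "\<forall>u. norm u = 1 \<longrightarrow> (\<exists>s\<in>S. s u \<noteq> 0)"
  shows "\<exists>S0 \<delta>. finite S0 \<and> S0 \<subseteq> S \<and> \<delta> > 0 \<and> (\<forall>u. norm u = 1 \<longrightarrow> (\<exists>s\<in>S0. \<delta> < norm (s u)))"
proof -
  define U where "U x = {w. snd x < norm (fst x w)}" for x :: "('a \<Rightarrow> 'b) \<times> real"
  have cover: "sphere 0 1 \<subseteq> (\<Union>x\<in>S \<times> {0<..}. U x)"
  proof
    fix u :: 'a assume "u \<in> sphere 0 1"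
    then obtain s where s: "s \<in> S" "s u \<noteq> 0" using nz by auto
    then have "(s, norm (s u) / 2) \<in> S \<times> {0<..}" "u \<in> U (s, norm (s u) / 2)"
      by (auto simp: U_def)
    then show "u \<in> (\<Union>x\<in>S \<times> {0<..}. U x)" by blast
  qed
  have "open (U x)" if "x \<in> S \<times> {0<..}" for x
    unfolding U_def
  proof (rule open_Collect_less)
    have "continuous_on UNIV (fst x)" using cont that by auto
    then show "continuous_on UNIV (\<lambda>w. norm (fst x w))" by (intro continuous_intros)
  qed (rule continuous_on_const)
  then obtain F where F: "F \<subseteq> S \<times> {0<..}" "finite F" "sphere 0 1 \<subseteq> (\<Union>x\<in>F. U x)"
    using compactE_image[OF compact_sphere _ cover] by blast
  define \<delta> where "\<delta> = Min (insert 1 (snd ` F))"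
  have \<delta>: "\<delta> > 0" "\<forall>x\<in>F. \<delta> \<le> snd x" using F(1,2) by (auto simp: \<delta>_def)
  have "\<exists>s\<in>fst ` F. \<delta> < norm (s u)" if "norm u = 1" for u
  proof -
    have "u \<in> sphere 0 1" using that by simp
    then obtain x where "x \<in> F" "snd x < norm (fst x u)" using F(3) by (auto simp: U_def)
    then show ?thesis using \<delta>(2) by force
  qed
  moreover have "finite (fst ` F)" "fst ` F \<subseteq> S" using F(1,2) by auto
  ultimately show ?thesis using \<delta>(1) by blast
qed

lemma norm_le_of_homog_bounds:
  fixes S0 :: "(complex ^ 'v \<Rightarrow> complex) set"
  assumes fin: "finite S0" and \<delta>: "\<delta> > 0"
    and hom: "\<forall>s\<in>S0. homog_V (K s) s \<and> s 0 = 0"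
    and detect: "\<forall>u. norm u = 1 \<longrightarrow> (\<exists>s\<in>S0. \<delta> < norm (s u))"
    and M: "\<forall>s\<in>S0. M s \<ge> 0" and r: "r \<ge> 0"
    and bnd: "\<forall>s\<in>S0. norm (s v) \<le> M s * r ^ K s"
  shows "norm v \<le> (1 + (\<Sum>s\<in>S0. M s) / \<delta>) * r"
proof (rule ccontr)
  define C where "C = 1 + (\<Sum>s\<in>S0. M s) / \<delta>"
  assume "\<not> norm v \<le> (1 + (\<Sum>s\<in>S0. M s) / \<delta>) * r"
  then have gt: "C * r < norm v" by (simp add: C_def)
  have "0 \<le> (\<Sum>s\<in>S0. M s)" using M by (intro sum_nonneg) auto
  then have C1: "C \<ge> 1" using \<delta> by (simp add: C_def)
  then have "C * r \<ge> 0" using r by simp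
  then have "v \<noteq> 0" using gt by auto
  then obtain u where u: "norm u = 1" "v = complex_of_real (norm v) *s u" using unit_decomp by blast
  obtain s where s: "s \<in> S0" "\<delta> < norm (s u)" using detect u(1) by blast
  have hs: "homog_V (K s) s" "s 0 = 0" using hom s(1) by auto
  have Kpos: "K s > 0"
  proof (rule ccontr)
    assume "\<not> K s > 0"
    then have "s u = s 0" using homog_deg0_const[of s u] hs(1) by simp
    then show False using s(2) hs(2) \<delta> by simp
  qed
  have "M s \<le> (\<Sum>s\<in>S0. M s)" using M s(1) fin by (intro member_le_sum) auto
  moreover have "\<delta> * C = \<delta> + (\<Sum>s\<in>S0. M s)" using \<delta> by (simp add: C_def algebra_simps)
  ultimately have "M s \<le> \<delta> * C" using \<delta> by linarith
  then have "M s * r ^ K s \<le> \<delta> * C * r ^ K s" by (intro mult_right_mono) (use r in auto)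
  also have "\<dots> \<le> \<delta> * (C ^ K s * r ^ K s)"
  proof -
    have "C \<le> C ^ K s" using C1 Kpos power_increasing[of 1 "K s" C] by simp
    then show ?thesis using \<delta> r by (simp add: mult.assoc mult_right_mono)
  qed
  also have "\<dots> = \<delta> * (C * r) ^ K s" by (simp add: power_mult_distrib)
  also have "\<dots> \<le> \<delta> * norm v ^ K s"
    using gt C1 r \<delta> by (intro mult_left_mono power_mono) auto
  also have "\<dots> < norm (s u) * norm v ^ K s" using s(2) \<open>v \<noteq> 0\<close> by simp
  also have "\<dots> = norm (s v)"
    using homog_norm[OF hs(1) u(1), of "norm v"] u(2) by (simp add: mult.commute)
  finally show False using bnd s(1) by (simp add: not_le[symmetric])
qed

lemma homog_bound_along_curve:
  fixes \<sigma> :: "nat \<Rightarrow> complex ^ 'v \<Rightarrow> complex" and c :: "nat \<Rightarrow> real \<Rightarrow> complex"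
  assumes s: "homog_V k s" "s 0 = 0"
    and p: "polyfun_on {..<n} p" "\<forall>v. s v = p (\<lambda>j. \<sigma> j v)"
    and mult: "enat k \<le> mult0 (\<lambda>t. p (\<lambda>j. c j t))"
  shows "\<exists>e>0. \<exists>M\<ge>0. \<forall>t v. \<bar>t\<bar> < e \<longrightarrow> (\<forall>j<n. c j t = \<sigma> j v) \<longrightarrow> norm (s v) \<le> M * \<bar>t\<bar> ^ k"
proof (cases "k = 0")
  case True
  then have "s v = 0" for v using homog_deg0_const[of s v] s by simp
  then have "\<forall>t v. \<bar>t\<bar> < 1 \<longrightarrow> (\<forall>j<n. c j t = \<sigma> j v) \<longrightarrow> norm (s v) \<le> 0 * \<bar>t\<bar> ^ k" by simp
  then show ?thesis using zero_less_one order_refl by blast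
next
  case False
  then have "k > 0" by simp
  from mult0_imp_bound[OF this mult] obtain e M where
    eM: "e > 0" "M \<ge> 0" "\<forall>t. \<bar>t\<bar> < e \<longrightarrow> norm (p (\<lambda>j. c j t)) \<le> M * \<bar>t\<bar> ^ k" by blast
  have "norm (s v) \<le> M * \<bar>t\<bar> ^ k" if "\<bar>t\<bar> < e" "\<forall>j<n. c j t = \<sigma> j v" for t v
  proof -
    have "s v = p (\<lambda>j. c j t)" using p polyfun_local[OF p(1), of "\<lambda>j. \<sigma> j v" "\<lambda>j. c j t"] that(2) by simp
    then show ?thesis using eM(3) that(1) by simp
  qed
  then show ?thesis using eM(1,2) by blast
qed

lemma lift_norm_bound:
  fixes S :: "(complex ^ 'v \<Rightarrow> complex) set"
    and \<sigma> :: "nat \<Rightarrow> complex ^ 'v \<Rightarrow> complex" and c :: "nat \<Rightarrow> real \<Rightarrow> complex"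
  assumes S_homog: "\<forall>s\<in>S. \<exists>k. homog_V k s" and S_cont: "\<forall>s\<in>S. continuous_on UNIV s"
    and S_zero: "\<forall>s\<in>S. s 0 = 0" and S_nz: "\<forall>v. v \<noteq> 0 \<longrightarrow> (\<exists>s\<in>S. s v \<noteq> 0)"
    and S_curve: "\<forall>s\<in>S. \<forall>k. homog_V k s \<longrightarrow> (\<exists>p. polyfun_on {..<n} p \<and>
                    (\<forall>v. s v = p (\<lambda>j. \<sigma> j v)) \<and> enat k \<le> mult0 (\<lambda>t. p (\<lambda>j. c j t)))"
  shows "\<exists>\<epsilon>>0. \<exists>C. \<forall>t v. \<bar>t\<bar> < \<epsilon> \<longrightarrow> (\<forall>j<n. c j t = \<sigma> j v) \<longrightarrow> norm v \<le> C * \<bar>t\<bar>"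
proof -
  from bchoice[OF S_homog] obtain K where K: "\<forall>s\<in>S. homog_V (K s) s" by blast
  have "\<forall>u. norm u = 1 \<longrightarrow> (\<exists>s\<in>S. s u \<noteq> 0)"
    using S_nz by (metis norm_zero zero_neq_one)
  from finite_nonvanishing_subfamily[OF S_cont this] obtain S0 \<delta> where
    S0: "finite S0" "S0 \<subseteq> S" "\<delta> > 0" "\<forall>u. norm u = 1 \<longrightarrow> (\<exists>s\<in>S0. \<delta> < norm (s u))" by blast
  define bound where "bound s e \<longleftrightarrow> (\<exists>M\<ge>0. \<forall>t v. \<bar>t\<bar> < e \<longrightarrow> (\<forall>j<n. c j t = \<sigma> j v) \<longrightarrow>
                                 norm (s v) \<le> M * \<bar>t\<bar> ^ K s)" for s e
  have "\<exists>e>0. \<forall>s\<in>S0. bound s e"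
  proof (rule common_radius[OF S0(1)])
    show "\<forall>s\<in>S0. \<exists>e>0. bound s e"
    proof
      fix s assume "s \<in> S0"
      then have sS: "s \<in> S" using S0(2) by blast
      then have hs: "homog_V (K s) s" using K by blast
      from S_curve[rule_format, OF sS hs] obtain p where
        p: "polyfun_on {..<n} p" "\<forall>v. s v = p (\<lambda>j. \<sigma> j v)" "enat (K s) \<le> mult0 (\<lambda>t. p (\<lambda>j. c j t))"
        by blast
      have "s 0 = 0" using S_zero sS by blast
      from homog_bound_along_curve[OF hs this p] show "\<exists>e>0. bound s e"
        unfolding bound_def .
    qed
    show "bound s e'" if "bound s e" "0 < e'" "e' \<le> e" for s e e'
      using that(1,3) unfolding bound_def by force
  qed
  then obtain \<epsilon> where \<epsilon>: "\<epsilon> > 0" "\<forall>s\<in>S0. bound s \<epsilon>" by blast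
  from bchoice[OF \<epsilon>(2)[unfolded bound_def]] obtain M where
    M: "\<forall>s\<in>S0. M s \<ge> 0 \<and> (\<forall>t v. \<bar>t\<bar> < \<epsilon> \<longrightarrow> (\<forall>j<n. c j t = \<sigma> j v) \<longrightarrow>
                                 norm (s v) \<le> M s * \<bar>t\<bar> ^ K s)" by blast
  have "norm v \<le> (1 + (\<Sum>s\<in>S0. M s) / \<delta>) * \<bar>t\<bar>"
    if "\<bar>t\<bar> < \<epsilon>" "\<forall>j<n. c j t = \<sigma> j v" for t v
  proof (rule norm_le_of_homog_bounds[OF S0(1,3) _ S0(4)])
    show "\<forall>s\<in>S0. homog_V (K s) s \<and> s 0 = 0" using K S_zero S0(2) by blast
    show "\<forall>s\<in>S0. M s \<ge> 0" "\<forall>s\<in>S0. norm (s v) \<le> M s * \<bar>t\<bar> ^ K s" using M that by auto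
  qed simp
  then show ?thesis using \<epsilon>(1) by blast
qed

lemma mult0_component_from_lift_bound:
  fixes \<sigma> :: "nat \<Rightarrow> complex ^ 'v \<Rightarrow> complex" and c :: "nat \<Rightarrow> real \<Rightarrow> complex"
  assumes I: "open I" "0 \<in> I" and c_in: "\<forall>t\<in>I. \<exists>v. \<forall>j<n. c j t = \<sigma> j v"
    and lift: "\<epsilon> > 0" "\<forall>t v. \<bar>t\<bar> < \<epsilon> \<longrightarrow> (\<forall>j<n. c j t = \<sigma> j v) \<longrightarrow> norm v \<le> C * \<bar>t\<bar>"
    and k: "k < n" "homog_V (d k) (\<sigma> k)" "d k > 0"
    and smooth: "Ck_on m I (c k)" "d k \<le> m"
  shows "enat (d k) \<le> mult0 (c k)"
proof -
  obtain B where B: "B \<ge> 0" "\<forall>v. norm (\<sigma> k v) \<le> B * norm v ^ d k"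
    using homog_bound[OF k(2,3)] by blast
  obtain eI where eI: "eI > 0" "ball 0 eI \<subseteq> I" by (rule openE[OF I])
  have bound: "\<forall>t. \<bar>t\<bar> < min \<epsilon> eI \<longrightarrow> norm (c k t) \<le> (B * C ^ d k) * \<bar>t\<bar> ^ d k"
  proof (intro allI impI)
    fix t :: real assume t: "\<bar>t\<bar> < min \<epsilon> eI"
    have "t \<in> ball 0 eI" using t by simp
    then obtain v where v: "\<forall>j<n. c j t = \<sigma> j v" using c_in eI(2) by blast
    have "norm (c k t) = norm (\<sigma> k v)" using v k(1) by simp
    also have "\<dots> \<le> B * norm v ^ d k" using B(2) by simp
    also have "\<dots> \<le> B * (C * \<bar>t\<bar>) ^ d k"
      using B(1) lift(2) t v by (intro mult_left_mono power_mono) auto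
    finally show "norm (c k t) \<le> (B * C ^ d k) * \<bar>t\<bar> ^ d k"
      by (simp add: power_mult_distrib mult.assoc)
  qed
  have "min \<epsilon> eI > 0" using lift(1) eI(1) by simp
  from mult0_of_flat_Ck[OF smooth(1) I smooth(2) this bound] show ?thesis .
qed

lemma mult0_coordinates_from_generators:
  fixes S :: "(complex ^ 'v \<Rightarrow> complex) set"
    and \<sigma> :: "nat \<Rightarrow> complex ^ 'v \<Rightarrow> complex" and c :: "nat \<Rightarrow> real \<Rightarrow> complex"
  assumes \<sigma>_homog: "\<forall>j<n. homog_V (d j) (\<sigma> j)" and dpos: "\<forall>j<n. d j > 0"
    and I: "open I" "0 \<in> I" and c_in: "\<forall>t\<in>I. \<exists>v. \<forall>j<n. c j t = \<sigma> j v"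
    and c_smooth: "\<forall>k<n. Ck_on m I (c k)" and d_le: "\<forall>k<n. d k \<le> m"
    and S_homog: "\<forall>s\<in>S. \<exists>k. homog_V k s" and S_cont: "\<forall>s\<in>S. continuous_on UNIV s"
    and S_zero: "\<forall>s\<in>S. s 0 = 0" and S_nz: "\<forall>v. v \<noteq> 0 \<longrightarrow> (\<exists>s\<in>S. s v \<noteq> 0)"
    and S_curve: "\<forall>s\<in>S. \<forall>k. homog_V k s \<longrightarrow> (\<exists>p. polyfun_on {..<n} p \<and>
                    (\<forall>v. s v = p (\<lambda>j. \<sigma> j v)) \<and> enat k \<le> mult0 (\<lambda>t. p (\<lambda>j. c j t)))"
  shows "\<forall>k<n. enat (d k) \<le> mult0 (c k)"
proof (intro allI impI)
  fix k assume k: "k < n"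
  obtain \<epsilon> C where lift: "\<epsilon> > 0"
    "\<forall>t v. \<bar>t\<bar> < \<epsilon> \<longrightarrow> (\<forall>j<n. c j t = \<sigma> j v) \<longrightarrow> norm v \<le> C * \<bar>t\<bar>"
    using lift_norm_bound[OF S_homog S_cont S_zero S_nz S_curve] by blast
  have "homog_V (d k) (\<sigma> k)" "d k > 0" "Ck_on m I (c k)" "d k \<le> m"
    using k \<sigma>_homog dpos c_smooth d_le by simp_all
  from mult0_component_from_lift_bound[where d = d, OF I c_in lift k this] show "enat (d k) \<le> mult0 (c k)" .
qed

theorem lemma6p2:
  fixes G :: "(complex ^ 'v ^ 'v) set"
    and n :: nat
    and \<sigma> :: "nat \<Rightarrow> complex ^ 'v \<Rightarrow> complex"
    and d :: "nat \<Rightarrow> nat"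
    and J :: "(complex ^ 'v \<Rightarrow> complex) set"
    and I :: "real set"
    and c :: "nat \<Rightarrow> real \<Rightarrow> complex"
  assumes G_fin: "finite G"
    and G_one: "mat 1 \<in> G"
    and G_mult: "\<forall>A\<in>G. \<forall>B\<in>G. A ** B \<in> G"
    and G_inv: "\<forall>A\<in>G. invertible A"
    and no_fixed: "\<forall>v. (\<forall>A\<in>G. A *v v = v) \<longrightarrow> v = 0"
    and \<sigma>_inv: "\<forall>k<n. \<sigma> k \<in> inv_ring G"
    and \<sigma>_homog: "\<forall>k<n. homog_V (d k) (\<sigma> k)"
    and \<sigma>_gen: "\<forall>f \<in> inv_ring G. \<exists>p. polyfun_on {..<n} p \<and> (\<forall>v. f v = p (\<lambda>j. \<sigma> j v))"
    and \<sigma>_minimal: "\<forall>k<n. \<not> (\<exists>p. polyfun_on ({..<n} - {k}) p \<and> (\<forall>v. \<sigma> k v = p (\<lambda>j. \<sigma> j v)))"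
    and J_gen: "\<exists>S. S \<subseteq> {f \<in> inv_ring G. \<exists>k. homog_V k f} \<and> J = ideal_gen (inv_ring G) S"
    and J_zero: "\<forall>v. (\<forall>f\<in>J. f v = 0) \<longleftrightarrow> (\<forall>k<n. \<sigma> k v = 0)"
    and I_open: "open I" and I_interval: "is_interval I" and I_zero: "0 \<in> I"
    and c_smooth: "\<forall>k<n. Ck_on (Max (d ` {..<n})) I (c k)"
    and c_in: "\<forall>t\<in>I. \<exists>v. \<forall>k<n. c k t = \<sigma> k v"
  shows "(\<forall>k<n. mult0 (c k) \<ge> enat (d k)) \<longleftrightarrow>
         (\<forall>f\<in>J. \<forall>k. homog_V k f \<longrightarrow>
            (\<forall>p. polyfun_on {..<n} p \<and> (\<forall>v. f v = p (\<lambda>j. \<sigma> j v)) \<longrightarrow>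
                 mult0 (\<lambda>t. p (\<lambda>j. c j t)) \<ge> enat k))"
proof -
  have dpos: "\<forall>k<n. d k > 0"
    using \<sigma>_homog \<sigma>_minimal minimal_generator_degree_pos[where d = d and \<sigma> = \<sigma> and n = n] by blast
  have \<sigma>0: "\<forall>j<n. \<sigma> j 0 = 0" using homog_zero \<sigma>_homog dpos by blast
  obtain S where S: "S \<subseteq> {f \<in> inv_ring G. \<exists>k. homog_V k f}" "J = ideal_gen (inv_ring G) S"
    using J_gen by blast
  have SJ: "S \<subseteq> J" using S(2) ideal_gen.ig_gen by blast
  show ?thesis
  proof
    assume "\<forall>k<n. mult0 (c k) \<ge> enat (d k)"
    then show "\<forall>f\<in>J. \<forall>k. homog_V k f \<longrightarrow> (\<forall>p. polyfun_on {..<n} p \<and> (\<forall>v. f v = p (\<lambda>j. \<sigma> j v)) \<longrightarrow>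
                 mult0 (\<lambda>t. p (\<lambda>j. c j t)) \<ge> enat k)"
      using mult0_invariant_along_curve[OF \<sigma>_homog dpos I_open I_zero c_in] by blast
  next
    assume R: "\<forall>f\<in>J. \<forall>k. homog_V k f \<longrightarrow> (\<forall>p. polyfun_on {..<n} p \<and> (\<forall>v. f v = p (\<lambda>j. \<sigma> j v)) \<longrightarrow>
                 mult0 (\<lambda>t. p (\<lambda>j. c j t)) \<ge> enat k)"
    show "\<forall>k<n. mult0 (c k) \<ge> enat (d k)"
    proof (rule mult0_coordinates_from_generators[OF \<sigma>_homog dpos I_open I_zero c_in c_smooth])
      show "\<forall>k<n. d k \<le> Max (d ` {..<n})" by (auto intro: Max_ge)
      show "\<forall>s\<in>S. \<exists>k. homog_V k s" using S(1) by blast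
      show "\<forall>s\<in>S. continuous_on UNIV s" using S(1) poly_V_cont by (auto simp: inv_ring_def)
      show "\<forall>s\<in>S. s 0 = 0" using SJ J_zero \<sigma>0 by blast
      show "\<forall>v. v \<noteq> 0 \<longrightarrow> (\<exists>s\<in>S. s v \<noteq> 0)"
        using nullcone_ideal_generators_detect[OF G_fin G_one G_mult G_inv \<sigma>_gen \<sigma>0 J_zero S(2)] by blast
      show "\<forall>s\<in>S. \<forall>k. homog_V k s \<longrightarrow> (\<exists>p. polyfun_on {..<n} p \<and>
              (\<forall>v. s v = p (\<lambda>j. \<sigma> j v)) \<and> enat k \<le> mult0 (\<lambda>t. p (\<lambda>j. c j t)))"
        using S(1) SJ \<sigma>_gen R by (auto simp: subset_iff) blast
    qed
  qed
qed

end
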